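(* Let $n\in\mathbb{N}$. Then: (i) the number of distinct nilpotent semigroups of degree $3$ on the set $\{1,2,\ldots,n\}$ (i.e. the number of associative multiplications on this set making it a nilpotent semigroup of degree $3$) is \[ \sum_{m=2}^{a(n)}\binom{n}{m}\, m\sum_{i=0}^{m-1}(-1)^i\binom{m-1}{i}(m-i)^{\left((n-m)^2\right)},\qquad a(n)=\left\lfloor n+\tfrac12-\sqrt{n-\tfrac34}\,\right\rfloor; \] (ii) the number of distinct commutative nilpotent semigroups of degree $3$ on $\{1,2,\ldots,n\}$ is \[ \sum_{m=2}^{c(n)}\binom{n}{m}\, m\sum_{i=0}^{m-1}(-1)^i\binom{m-1}{i}(m-i)^{(n-m)(n-m+1)/2},\qquad c(n)=\left\lfloor n+\tfrac32-\sqrt{2n+\tfrac14}\,\right\rfloor. \] (Empty sums are $0$.)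
   Context: For a semigroup $S$ and $r\in\mathbb{N}$ let $S^r=\{s_1s_2\cdots s_r : s_1,\ldots,s_r\in S\}$. A semigroup $S$ is nilpotent if $|S^r|=1$ for some $r\in\mathbb{N}$, and it has (nilpotency) degree $r$ if $r$ is the least such number. Thus $S$ is nilpotent of degree $3$ iff $S$ has a zero, every product of three elements equals the zero, and some product of two elements is non-zero. Counting "on a set" means counting distinct multiplication tables (up to equality). *)

theory Defs
  imports "HOL-Analysis.Analysis" "HOL-Library.FuncSet"
begin

definition semigroup_on :: "'a set \<Rightarrow> ('a \<Rightarrow> 'a \<Rightarrow> 'a) \<Rightarrow> bool" where
  "semigroup_on A f \<longleftrightarrow> (\<forall>x\<in>A. \<forall>y\<in>A. f x y \<in> A) \<and>
     (\<forall>x\<in>A. \<forall>y\<in>A. \<forall>z\<in>A. f (f x y) z = f x (f y z))"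

text \<open>S^r = {s_1 s_2 ... s_r}, products bracketed from the left (well-defined by associativity).\<close>
definition power_set_sg :: "'a set \<Rightarrow> ('a \<Rightarrow> 'a \<Rightarrow> 'a) \<Rightarrow> nat \<Rightarrow> 'a set" where
  "power_set_sg A f r = {foldl f (hd xs) (tl xs) | xs. length xs = r \<and> set xs \<subseteq> A}"

definition nilpotent_degree :: "'a set \<Rightarrow> ('a \<Rightarrow> 'a \<Rightarrow> 'a) \<Rightarrow> nat \<Rightarrow> bool" where
  "nilpotent_degree A f r \<longleftrightarrow> semigroup_on A f \<and> r \<ge> 1 \<and>
     card (power_set_sg A f r) = 1 \<and> (\<forall>k. 1 \<le> k \<and> k < r \<longrightarrow> card (power_set_sg A f k) \<noteq> 1)"

definition commutative_on :: "'a set \<Rightarrow> ('a \<Rightarrow> 'a \<Rightarrow> 'a) \<Rightarrow> bool" where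
  "commutative_on A f \<longleftrightarrow> (\<forall>x\<in>A. \<forall>y\<in>A. f x y = f y x)"

text \<open>Multiplication tables on {1..n}: functions {1..n} \<rightarrow> {1..n} \<rightarrow> {1..n}, extensional
  (undefined outside), so distinct tables correspond to distinct elements.\<close>
definition tables :: "nat \<Rightarrow> (nat \<Rightarrow> nat \<Rightarrow> nat) set" where
  "tables n = {1..n} \<rightarrow>\<^sub>E ({1..n} \<rightarrow>\<^sub>E {1..n})"

definition a_bound :: "nat \<Rightarrow> int" where
  "a_bound n = \<lfloor>real n + 1/2 - sqrt (real n - 3/4)\<rfloor>"

definition c_bound :: "nat \<Rightarrow> int" where
  "c_bound n = \<lfloor>real n + 3/2 - sqrt (2 * real n + 1/4)\<rfloor>"

end

theory Submission
  imports Defs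
begin

(* A multiplication f on a finite set A is nilpotent of degree 3 iff its set of products
   B = A\<cdot>A has at least two elements and some z annihilates B from both sides
   (B\<cdot>A = A\<cdot>B = {z}); then z \<in> B and associativity is automatic.  Hence the nilpotent tables
   split disjointly according to the pair (B, z).  With C = A - B, a table with square B
   and zero z is the same thing as a map g : C \<times> C \<rightarrow> B whose image contains B - {z}
   (its values on C \<times> C); commutative tables correspond to maps on the pairs (x, y) \<in> C \<times> C
   with x \<le> y.  Maps X \<rightarrow> Y covering a set Q \<subseteq> Y are counted by inclusion-exclusion. *)

section \<open>Counting covering maps by inclusion-exclusion\<close>

text \<open>The inclusion-exclusion sum: the number of maps from a k-set into an M-set whose image
  contains a fixed q-subset.\<close>
definition cover_sum :: "int \<Rightarrow> nat \<Rightarrow> nat \<Rightarrow> int" where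
  "cover_sum M q k = (\<Sum>i\<le>q. (-1)^i * int (q choose i) * (M - int i)^k)"

text \<open>Pascal's rule turns into the recursion of inclusion-exclusion: one more point to cover
  means subtracting the maps that avoid it.\<close>
lemma cover_sum_Suc: "cover_sum M (Suc q) k = cover_sum M q k - cover_sum (M - 1) q k"
proof -
  have shift: "cover_sum M q k = M^k + (\<Sum>i\<le>q. (-1)^(Suc i) * int (q choose Suc i) * (M - int (Suc i))^k)"
  proof -
    have "cover_sum M q k = (\<Sum>i\<le>Suc q. (-1)^i * int (q choose i) * (M - int i)^k)"
      unfolding cover_sum_def by simp
    then show ?thesis by (subst (asm) sum.atMost_Suc_shift) simp
  qed
  have "cover_sum M (Suc q) k
      = M^k + (\<Sum>i\<le>q. (-1)^(Suc i) * int (Suc q choose Suc i) * (M - int (Suc i))^k)"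
    unfolding cover_sum_def by (subst sum.atMost_Suc_shift) simp
  also have "(\<Sum>i\<le>q. (-1)^(Suc i) * int (Suc q choose Suc i) * (M - int (Suc i))^k)
     = (\<Sum>i\<le>q. (-1)^(Suc i) * int (q choose Suc i) * (M - int (Suc i))^k)
       - (\<Sum>i\<le>q. (-1)^i * int (q choose i) * ((M - 1) - int i)^k)"
    by (subst sum_subtractf[symmetric], rule sum.cong) (simp_all add: algebra_simps)
  finally show ?thesis
    unfolding shift cover_sum_def[of "M - 1"] by simp
qed

text \<open>Inclusion-exclusion: the maps X \<rightarrow> Y whose image covers Q \<subseteq> Y are counted by
  cover_sum.  Induction on Q: covering insert b Q means covering Q but not avoiding b.\<close>
lemma card_covering_maps:
  assumes "finite Q" "finite X" "finite Y" "Q \<subseteq> Y"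
  shows "int (card {g \<in> X \<rightarrow>\<^sub>E Y. Q \<subseteq> g ` X}) = cover_sum (int (card Y)) (card Q) (card X)"
  using assms(1,3,4)
proof (induction Q arbitrary: Y rule: finite_induct)
  case empty
  then show ?case by (simp add: cover_sum_def card_PiE \<open>finite X\<close>)
next
  case (insert b Q)
  define S where "S = {g \<in> X \<rightarrow>\<^sub>E Y. Q \<subseteq> g ` X}"
  define S_avoid where "S_avoid = {g \<in> X \<rightarrow>\<^sub>E (Y - {b}). Q \<subseteq> g ` X}"
  have sub: "S_avoid \<subseteq> S" unfolding S_def S_avoid_def by (auto simp: PiE_def Pi_def)
  have split: "{g \<in> X \<rightarrow>\<^sub>E Y. insert b Q \<subseteq> g ` X} = S - S_avoid"
    unfolding S_def S_avoid_def by (auto simp: PiE_def Pi_def)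
  have "finite S" unfolding S_def using \<open>finite X\<close> insert.prems by (simp add: finite_PiE)
  then have card_diff: "int (card (S - S_avoid)) = int (card S) - int (card S_avoid)"
    using sub by (simp add: card_Diff_subset card_mono of_nat_diff finite_subset)
  have "int (card S) = cover_sum (int (card Y)) (card Q) (card X)"
    unfolding S_def using insert.IH insert.prems by simp
  moreover have "int (card S_avoid) = cover_sum (int (card Y) - 1) (card Q) (card X)"
  proof -
    have "card Y > 0" using insert.prems by (auto simp: card_gt_0_iff)
    then show ?thesis
      unfolding S_avoid_def using insert.IH[of "Y - {b}"] insert.prems insert.hyps
      by (auto simp: of_nat_diff)
  qed
  ultimately show ?case
    using insert.hyps split card_diff by (simp add: cover_sum_Suc)
qed

text \<open>If there are fewer points k than points q to be covered, no map covers them; so the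
  inclusion-exclusion sum vanishes.  This is what truncates the outer sums of the theorem.\<close>
lemma cover_sum_vanishes:
  assumes "q \<le> M" "k < q"
  shows "cover_sum (int M) q k = 0"
proof -
  have none: "{g \<in> {..<k} \<rightarrow>\<^sub>E {..<M}. {..<q} \<subseteq> g ` {..<k}} = {}"
  proof (rule ccontr)
    assume "\<not> ?thesis"
    then obtain g where "{..<q} \<subseteq> g ` {..<k}" by auto
    then have "card {..<q} \<le> card (g ` {..<k})" by (intro card_mono) auto
    also have "\<dots> \<le> k" using card_image_le[of "{..<k}" g] by simp
    finally show False using assms by simp
  qed
  have "int (card {g \<in> {..<k} \<rightarrow>\<^sub>E {..<M}. {..<q} \<subseteq> g ` {..<k}})
      = cover_sum (int (card {..<M})) (card {..<q}) (card {..<k})"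
    using assms by (intro card_covering_maps) auto
  then show ?thesis unfolding none by simp
qed

section \<open>Nilpotency of degree 3\<close>

definition products :: "('a \<Rightarrow> 'a \<Rightarrow> 'a) \<Rightarrow> 'a set \<Rightarrow> 'a set" where
  "products f A = (\<lambda>(x, y). f x y) ` (A \<times> A)"

lemma products_iff: "b \<in> products f A \<longleftrightarrow> (\<exists>x\<in>A. \<exists>y\<in>A. b = f x y)"
  unfolding products_def by auto

lemma products_intro: "x \<in> A \<Longrightarrow> y \<in> A \<Longrightarrow> f x y \<in> products f A"
  unfolding products_def by (rule image_eqI[of _ _ "(x, y)"]) auto

lemma finite_products: "finite A \<Longrightarrow> finite (products f A)"
  unfolding products_def by simp

lemma power_set_sg_1: "power_set_sg A f 1 = A"
proof
  show "power_set_sg A f 1 \<subseteq> A"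
    unfolding power_set_sg_def by (auto simp: length_Suc_conv)
  show "A \<subseteq> power_set_sg A f 1"
    unfolding power_set_sg_def by (auto intro!: exI[where x="[_]"])
qed

lemma power_set_sg_2: "power_set_sg A f 2 = products f A"
proof
  show "power_set_sg A f 2 \<subseteq> products f A"
    unfolding power_set_sg_def by (fastforce simp: length_Suc_conv numeral_2_eq_2 products_iff)
  show "products f A \<subseteq> power_set_sg A f 2"
  proof
    fix v assume "v \<in> products f A"
    then obtain x y where "x \<in> A" "y \<in> A" "v = f x y" using products_iff by metis
    then show "v \<in> power_set_sg A f 2"
      unfolding power_set_sg_def by (intro CollectI exI[where x = "[x, y]"]) auto
  qed
qed

lemma power_set_sg_3:
  "power_set_sg A f 3 = {f (f x y) w | x y w. x \<in> A \<and> y \<in> A \<and> w \<in> A}"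
proof
  show "power_set_sg A f 3 \<subseteq> {f (f x y) w | x y w. x \<in> A \<and> y \<in> A \<and> w \<in> A}"
    unfolding power_set_sg_def by (auto simp: length_Suc_conv numeral_3_eq_3) blast
  show "{f (f x y) w | x y w. x \<in> A \<and> y \<in> A \<and> w \<in> A} \<subseteq> power_set_sg A f 3"
  proof
    fix v assume "v \<in> {f (f x y) w | x y w. x \<in> A \<and> y \<in> A \<and> w \<in> A}"
    then obtain x y w where "x \<in> A" "y \<in> A" "w \<in> A" "v = f (f x y) w" by blast
    then show "v \<in> power_set_sg A f 3"
      unfolding power_set_sg_def by (intro CollectI exI[where x = "[x, y, w]"]) auto
  qed
qed

text \<open>A nilpotent semigroup of degree 3 has a zero z = S^3 annihilating S^2 on both sides
  (the left product by associativity), and S^2 is not a singleton.\<close>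
lemma nilpotent_degree_3_zero:
  assumes "finite A" and nil: "nilpotent_degree A f 3"
  shows "2 \<le> card (products f A) \<and> (\<exists>z. \<forall>b\<in>products f A. \<forall>w\<in>A. f b w = z \<and> f w b = z)"
proof -
  have sg: "semigroup_on A f" and c3: "card (power_set_sg A f 3) = 1"
    and c2: "card (power_set_sg A f 2) \<noteq> 1"
    using nil unfolding nilpotent_degree_def by auto
  obtain z where z: "power_set_sg A f 3 = {z}" using c3 card_1_singletonE by blast
  have zero: "f (f x y) w = z" if "x \<in> A" "y \<in> A" "w \<in> A" for x y w
    using z that unfolding power_set_sg_3 by blast
  have "A \<noteq> {}" using z unfolding power_set_sg_3 by auto
  then have "card (products f A) \<noteq> 0"
    using finite_products[OF \<open>finite A\<close>] unfolding products_def by auto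
  then have "2 \<le> card (products f A)"
    using c2 unfolding power_set_sg_2 by linarith
  moreover have "\<forall>b\<in>products f A. \<forall>w\<in>A. f b w = z \<and> f w b = z"
  proof (intro ballI)
    fix b w assume "b \<in> products f A" "w \<in> A"
    then obtain x y where "x \<in> A" "y \<in> A" "b = f x y" using products_iff by metis
    moreover have "f w (f x y) = f (f w x) y"
      using sg \<open>w \<in> A\<close> \<open>x \<in> A\<close> \<open>y \<in> A\<close> unfolding semigroup_on_def by simp
    ultimately show "f b w = z \<and> f w b = z" using zero \<open>w \<in> A\<close> by simp
  qed
  ultimately show ?thesis by (rule conjI[OF _ exI])
qed

text \<open>Conversely, a closed multiplication whose products are annihilated by a common z is
  associative (both bracketings give z) and has S^3 = {z}.\<close>
lemma zero_imp_nilpotent_degree_3: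
  assumes closed: "\<And>x y. x \<in> A \<Longrightarrow> y \<in> A \<Longrightarrow> f x y \<in> A"
    and two: "2 \<le> card (products f A)"
    and zero: "\<forall>b\<in>products f A. \<forall>w\<in>A. f b w = z \<and> f w b = z"
  shows "nilpotent_degree A f 3"
proof -
  have triple: "f (f x y) w = z" "f x (f y w) = z" if "x \<in> A" "y \<in> A" "w \<in> A" for x y w
  proof -
    have "f x y \<in> products f A" "f y w \<in> products f A" using that by (simp_all add: products_intro)
    then show "f (f x y) w = z" "f x (f y w) = z" using zero that by simp_all
  qed
  have "semigroup_on A f"
    unfolding semigroup_on_def using closed triple by simp
  moreover have "power_set_sg A f 3 = {z}"
  proof
    show "power_set_sg A f 3 \<subseteq> {z}" unfolding power_set_sg_3 using triple by auto
    obtain a where a: "a \<in> A" using two unfolding products_def by fastforce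
    then have "f (f a a) a \<in> power_set_sg A f 3" unfolding power_set_sg_3 by blast
    then show "{z} \<subseteq> power_set_sg A f 3" using triple(1)[OF a a a] by simp
  qed
  moreover have "card (power_set_sg A f 1) \<noteq> 1"
  proof
    assume "card (power_set_sg A f 1) = 1"
    then obtain a where "A = {a}" unfolding power_set_sg_1 using card_1_singletonE by blast
    then show False using two unfolding products_def by simp
  qed
  moreover have "card (power_set_sg A f 2) \<noteq> 1" using two unfolding power_set_sg_2 by simp
  ultimately show ?thesis
    unfolding nilpotent_degree_def by (auto simp: less_Suc_eq numeral_3_eq_3 numeral_2_eq_2)
qed

definition zero_tables :: "'a set \<Rightarrow> 'a set \<Rightarrow> 'a \<Rightarrow> ('a \<Rightarrow> 'a \<Rightarrow> 'a) set" where
  "zero_tables A B z = {f \<in> A \<rightarrow>\<^sub>E (A \<rightarrow>\<^sub>E A).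
     products f A = B \<and> (\<forall>b\<in>B. \<forall>w\<in>A. f b w = z \<and> f w b = z)}"

definition pointed_squares :: "'a set \<Rightarrow> ('a set \<times> 'a) set" where
  "pointed_squares A = (SIGMA B:{B. B \<subseteq> A \<and> 2 \<le> card B}. B)"

lemma finite_pointed_squares: "finite A \<Longrightarrow> finite (pointed_squares A)"
  unfolding pointed_squares_def by (auto intro!: finite_SigmaI intro: finite_subset)

lemma nilpotent_degree_3_iff_zero_table:
  assumes "finite A" "f \<in> A \<rightarrow>\<^sub>E (A \<rightarrow>\<^sub>E A)"
  shows "nilpotent_degree A f 3 \<longleftrightarrow> (\<exists>(B, z)\<in>pointed_squares A. f \<in> zero_tables A B z)"
proof
  have closed: "\<And>x y. x \<in> A \<Longrightarrow> y \<in> A \<Longrightarrow> f x y \<in> A" using assms(2) by auto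
  show "\<exists>(B, z)\<in>pointed_squares A. f \<in> zero_tables A B z" if nil: "nilpotent_degree A f 3"
  proof -
    obtain z where two: "2 \<le> card (products f A)"
      and zero: "\<forall>b\<in>products f A. \<forall>w\<in>A. f b w = z \<and> f w b = z"
      using nilpotent_degree_3_zero[OF assms(1) nil] by blast
    have sub: "products f A \<subseteq> A" using closed by (auto simp: products_iff)
    obtain b where b: "b \<in> products f A" using two by fastforce
    then have "f b b = z" using zero sub by blast
    moreover have "f b b \<in> products f A" using b sub by (auto intro: products_intro)
    ultimately have "(products f A, z) \<in> pointed_squares A"
      unfolding pointed_squares_def using two sub by simp
    moreover have "f \<in> zero_tables A (products f A) z"
      unfolding zero_tables_def using assms(2) zero by simp
    ultimately show ?thesis by blast
  qed
  show "nilpotent_degree A f 3" if ex: "\<exists>(B, z)\<in>pointed_squares A. f \<in> zero_tables A B z"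
  proof -
    obtain B z where "(B, z) \<in> pointed_squares A" "f \<in> zero_tables A B z" using ex by blast
    then have two: "2 \<le> card (products f A)"
      and zero: "\<forall>b\<in>products f A. \<forall>w\<in>A. f b w = z \<and> f w b = z"
      unfolding pointed_squares_def zero_tables_def by auto
    show ?thesis using zero_imp_nilpotent_degree_3[OF closed two zero] .
  qed
qed

text \<open>A table determines its square B and, as B is nonempty, its zero z.\<close>
lemma zero_tables_disjoint:
  assumes "(B, z) \<in> pointed_squares A" "(B', z') \<noteq> (B, z)"
  shows "zero_tables A B z \<inter> zero_tables A B' z' = {}"
proof -
  obtain b where b: "b \<in> B" "b \<in> A" using assms(1) unfolding pointed_squares_def by fastforce
  have "B' = B \<and> z' = z" if "f \<in> zero_tables A B z" "f \<in> zero_tables A B' z'" for f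
  proof -
    have "products f A = B" "products f A = B'" using that unfolding zero_tables_def by auto
    moreover from this have "f b b = z" "f b b = z'" using that b unfolding zero_tables_def by auto
    ultimately show ?thesis by simp
  qed
  then show ?thesis using assms(2) by blast
qed

lemma card_nilpotent_degree_3_split:
  assumes "finite A"
  shows "card {f \<in> A \<rightarrow>\<^sub>E (A \<rightarrow>\<^sub>E A). nilpotent_degree A f 3 \<and> Q f}
       = (\<Sum>(B, z)\<in>pointed_squares A. card {f \<in> zero_tables A B z. Q f})"
proof -
  define F where "F = (\<lambda>(B, z). {f \<in> zero_tables A B z. Q f})"
  have tables: "F p \<subseteq> A \<rightarrow>\<^sub>E (A \<rightarrow>\<^sub>E A)" for p
    unfolding F_def zero_tables_def by auto
  have union: "{f \<in> A \<rightarrow>\<^sub>E (A \<rightarrow>\<^sub>E A). nilpotent_degree A f 3 \<and> Q f} = (\<Union>p\<in>pointed_squares A. F p)"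
    (is "?L = ?R")
  proof
    show "?L \<subseteq> ?R"
    proof
      fix f assume "f \<in> ?L"
      then have f: "f \<in> A \<rightarrow>\<^sub>E (A \<rightarrow>\<^sub>E A)" "nilpotent_degree A f 3" "Q f" by auto
      then obtain B z where "(B, z) \<in> pointed_squares A" "f \<in> zero_tables A B z"
        using nilpotent_degree_3_iff_zero_table[OF assms f(1)] by blast
      then show "f \<in> ?R" using f(3) unfolding F_def by blast
    qed
    show "?R \<subseteq> ?L"
    proof
      fix f assume "f \<in> ?R"
      then obtain p where p: "p \<in> pointed_squares A" "f \<in> F p" by blast
      obtain B z where "p = (B, z)" by (cases p)
      with p have Bz: "(B, z) \<in> pointed_squares A" "f \<in> zero_tables A B z" "Q f"
        unfolding F_def by auto
      moreover have f: "f \<in> A \<rightarrow>\<^sub>E (A \<rightarrow>\<^sub>E A)" using tables p by blast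
      ultimately have "nilpotent_degree A f 3"
        using nilpotent_degree_3_iff_zero_table[OF assms f] by blast
      then show "f \<in> ?L" using f Bz by blast
    qed
  qed
  have "card (\<Union>p\<in>pointed_squares A. F p) = (\<Sum>p\<in>pointed_squares A. card (F p))"
  proof (rule card_UN_disjoint)
    show "finite (pointed_squares A)" using assms by (rule finite_pointed_squares)
    show "\<forall>p\<in>pointed_squares A. finite (F p)"
      using tables assms by (meson finite_PiE finite_subset)
    show "\<forall>p\<in>pointed_squares A. \<forall>q\<in>pointed_squares A. p \<noteq> q \<longrightarrow> F p \<inter> F q = {}"
    proof (intro ballI impI)
      fix p q assume "p \<in> pointed_squares A" "q \<in> pointed_squares A" "p \<noteq> q"
      moreover obtain B z B' z' where "p = (B, z)" "q = (B', z')" by (cases p, cases q)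
      ultimately show "F p \<inter> F q = {}"
        using zero_tables_disjoint[of B z A B' z'] unfolding F_def by auto
    qed
  qed
  also have "\<dots> = (\<Sum>(B, z)\<in>pointed_squares A. card {f \<in> zero_tables A B z. Q f})"
    unfolding F_def by (rule sum.cong) (simp_all split: prod.splits)
  finally show ?thesis unfolding union .
qed

lemma sum_pointed_squares:
  fixes h :: "nat \<Rightarrow> int"
  assumes "finite A"
  shows "(\<Sum>(B, z)\<in>pointed_squares A. h (card B))
       = (\<Sum>m=2..card A. int (card A choose m) * (int m * h m))"
proof -
  let ?S = "{B. B \<subseteq> A \<and> 2 \<le> card B}"
  have fin: "finite ?S" using assms by (auto intro: rev_finite_subset[of "Pow A"])
  have "(\<Sum>(B, z)\<in>pointed_squares A. h (card B)) = (\<Sum>B\<in>?S. \<Sum>z\<in>B. h (card B))"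
    unfolding pointed_squares_def
    by (rule sum.Sigma[symmetric]) (use fin assms in \<open>auto intro: finite_subset\<close>)
  also have "\<dots> = (\<Sum>B\<in>?S. int (card B) * h (card B))" by simp
  also have "\<dots> = (\<Sum>m\<in>{2..card A}. \<Sum>B\<in>{B \<in> ?S. card B = m}. int (card B) * h (card B))"
    using assms by (intro sum.group[symmetric] fin) (auto intro: card_mono)
  also have "\<dots> = (\<Sum>m=2..card A. int (card A choose m) * (int m * h m))"
  proof (rule sum.cong[OF refl])
    fix m assume "m \<in> {2..card A}"
    then have "{B \<in> ?S. card B = m} = {B. B \<subseteq> A \<and> card B = m}" by auto
    then have "(\<Sum>B\<in>{B \<in> ?S. card B = m}. int (card B) * h (card B))
        = (\<Sum>B\<in>{B. B \<subseteq> A \<and> card B = m}. int m * h m)"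
      by (intro sum.cong) auto
    also have "\<dots> = int (card A choose m) * (int m * h m)"
      using n_subsets[OF assms, of m] by simp
    finally show "(\<Sum>B\<in>{B \<in> ?S. card B = m}. int (card B) * h (card B))
        = int (card A choose m) * (int m * h m)" .
  qed
  finally show ?thesis .
qed

section \<open>Tables with a given square and zero as covering maps\<close>

text \<open>Fix B \<subseteq> A and z \<in> B; put C = A - B.  A table in zero_tables A B z is determined by its
  values on C \<times> C.  To treat ordinary and commutative tables at once, we fix a set D \<subseteq> C \<times> C
  of representative pairs and a retraction r of C \<times> C onto D, and consider the tables that
  take the same value at (x, y) and at r (x, y).  These correspond bijectively to the maps
  D \<rightarrow> B covering B - {z}.\<close>
locale representatives =
  fixes A B :: "'a set" and z :: 'a and D :: "('a \<times> 'a) set" and r :: "'a \<times> 'a \<Rightarrow> 'a \<times> 'a"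
  assumes B_sub: "B \<subseteq> A" and z_in: "z \<in> B"
    and D_sub: "D \<subseteq> (A - B) \<times> (A - B)"
    and r_into: "\<And>x y. x \<in> A - B \<Longrightarrow> y \<in> A - B \<Longrightarrow> r (x, y) \<in> D"
    and r_fix: "\<And>p. p \<in> D \<Longrightarrow> r p = p"
begin

definition normal_tables :: "('a \<Rightarrow> 'a \<Rightarrow> 'a) set" where
  "normal_tables = {f \<in> zero_tables A B z. \<forall>x\<in>A - B. \<forall>y\<in>A - B. f x y = case_prod f (r (x, y))}"

definition covering_maps :: "('a \<times> 'a \<Rightarrow> 'a) set" where
  "covering_maps = {g \<in> D \<rightarrow>\<^sub>E B. B - {z} \<subseteq> g ` D}"

definition encode :: "('a \<Rightarrow> 'a \<Rightarrow> 'a) \<Rightarrow> 'a \<times> 'a \<Rightarrow> 'a" where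
  "encode f = restrict (case_prod f) D"

definition decode :: "('a \<times> 'a \<Rightarrow> 'a) \<Rightarrow> 'a \<Rightarrow> 'a \<Rightarrow> 'a" where
  "decode g = (\<lambda>x\<in>A. \<lambda>y\<in>A. if x \<in> A - B \<and> y \<in> A - B then g (r (x, y)) else z)"

text \<open>Every product outside z comes from a pair in C \<times> C, hence from a representative.\<close>
lemma encode_in:
  assumes "f \<in> normal_tables"
  shows "encode f \<in> covering_maps"
proof -
  have sq: "products f A = B" and zero: "\<forall>b\<in>B. \<forall>w\<in>A. f b w = z \<and> f w b = z"
    and norm: "\<forall>x\<in>A - B. \<forall>y\<in>A - B. f x y = case_prod f (r (x, y))"
    using assms unfolding normal_tables_def zero_tables_def by auto
  have "case_prod f p \<in> B" if p: "p \<in> D" for p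
  proof -
    obtain x y where "p = (x, y)" "x \<in> A" "y \<in> A" using p D_sub by auto
    then show ?thesis using sq products_intro[of x A y f] by simp
  qed
  then have "encode f \<in> D \<rightarrow>\<^sub>E B" unfolding encode_def by simp
  moreover have "b \<in> encode f ` D" if b: "b \<in> B - {z}" for b
  proof -
    have "b \<in> products f A" using b sq by simp
    then obtain x y where xy: "x \<in> A" "y \<in> A" "b = f x y" unfolding products_iff by auto
    then have "x \<in> A - B" "y \<in> A - B" using zero b by auto
    then have "r (x, y) \<in> D" "b = case_prod f (r (x, y))" using r_into norm xy by auto
    then show ?thesis unfolding encode_def by force
  qed
  ultimately show ?thesis unfolding covering_maps_def by blast
qed

lemma decode_in:
  assumes "g \<in> covering_maps"
  shows "decode g \<in> normal_tables"
proof -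
  have gB: "g \<in> D \<rightarrow>\<^sub>E B" and cover: "B - {z} \<subseteq> g ` D"
    using assms unfolding covering_maps_def by auto
  have val: "g (r (x, y)) \<in> B" if "x \<in> A - B" "y \<in> A - B" for x y
    using gB r_into that by auto
  have "decode g \<in> A \<rightarrow>\<^sub>E (A \<rightarrow>\<^sub>E A)"
    unfolding decode_def using val B_sub z_in by auto
  moreover have "products (decode g) A = B"
  proof
    show "products (decode g) A \<subseteq> B"
    proof
      fix b assume "b \<in> products (decode g) A"
      then obtain x y where "x \<in> A" "y \<in> A" "b = decode g x y" unfolding products_iff by auto
      then show "b \<in> B" unfolding decode_def using val z_in by auto
    qed
    have zA: "z \<in> A" using z_in B_sub by auto
    then have "decode g z z = z" unfolding decode_def using z_in by simp
    then have "z \<in> products (decode g) A" using products_intro[OF zA zA, of "decode g"] by simp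
    moreover have "b \<in> products (decode g) A" if b: "b \<in> B - {z}" for b
    proof -
      obtain x y where xy: "(x, y) \<in> D" "b = g (x, y)" using cover b by auto
      then have "x \<in> A - B" "y \<in> A - B" using D_sub by auto
      then have "decode g x y = b" unfolding decode_def using xy r_fix by simp
      then show ?thesis using \<open>x \<in> A - B\<close> \<open>y \<in> A - B\<close> products_intro[of x A y "decode g"] by simp
    qed
    ultimately show "B \<subseteq> products (decode g) A" by blast
  qed
  moreover have "\<forall>b\<in>B. \<forall>w\<in>A. decode g b w = z \<and> decode g w b = z"
    unfolding decode_def using B_sub by auto
  moreover have "decode g x y = case_prod (decode g) (r (x, y))"
    if "x \<in> A - B" "y \<in> A - B" for x y
    using that r_into[OF that] D_sub r_fix unfolding decode_def by (auto split: prod.splits)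
  ultimately show ?thesis unfolding normal_tables_def zero_tables_def by blast
qed

text \<open>The two maps are mutually inverse; a table is recovered from its values on D because
  it is extensional, constant z off C \<times> C, and invariant under r on C \<times> C.\<close>
lemma decode_encode:
  assumes "f \<in> normal_tables"
  shows "decode (encode f) = f"
proof -
  have f: "f \<in> A \<rightarrow>\<^sub>E (A \<rightarrow>\<^sub>E A)" and zero: "\<forall>b\<in>B. \<forall>w\<in>A. f b w = z \<and> f w b = z"
    and norm: "\<forall>x\<in>A - B. \<forall>y\<in>A - B. f x y = case_prod f (r (x, y))"
    using assms unfolding normal_tables_def zero_tables_def by auto
  have "decode (encode f) x y = f x y" if "x \<in> A" "y \<in> A" for x y
    using that zero norm r_into unfolding decode_def encode_def by auto
  moreover have "f x y = undefined" if "x \<in> A" "y \<notin> A" for x y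
    using f that by (auto simp: PiE_def extensional_def)
  ultimately show ?thesis
    using f unfolding decode_def by (auto simp: fun_eq_iff PiE_def extensional_def)
qed

lemma encode_decode:
  assumes "g \<in> covering_maps"
  shows "encode (decode g) = g"
proof -
  have g: "g \<in> D \<rightarrow>\<^sub>E B" using assms unfolding covering_maps_def by auto
  have "encode (decode g) = restrict g D"
    unfolding encode_def decode_def using D_sub r_fix by (intro restrict_ext) auto
  then show ?thesis using g by simp
qed

lemma card_normal_tables: "card normal_tables = card covering_maps"
  by (rule bij_betw_same_card[of encode], rule bij_betw_byWitness[where f' = decode])
    (auto intro: encode_in decode_in decode_encode encode_decode)

lemma card_normal_tables_formula:
  assumes "finite B" "finite D"
  shows "int (card normal_tables) = cover_sum (int (card B)) (card B - 1) (card D)"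
  using card_covering_maps[of "B - {z}" D B] assms z_in
  unfolding card_normal_tables covering_maps_def by simp

end

lemma card_zero_tables:
  assumes "finite A" "B \<subseteq> A" "z \<in> B"
  shows "int (card (zero_tables A B z))
       = cover_sum (int (card B)) (card B - 1) ((card A - card B)^2)"
proof -
  interpret representatives A B z "(A - B) \<times> (A - B)" id
    by unfold_locales (use assms in auto)
  have "normal_tables = zero_tables A B z" unfolding normal_tables_def by simp
  moreover have "card ((A - B) \<times> (A - B)) = (card A - card B)^2"
    using assms by (simp add: card_cartesian_product card_Diff_subset power2_eq_square finite_subset)
  ultimately show ?thesis
    using card_normal_tables_formula assms by (simp add: finite_subset)
qed

lemma card_ordered_pairs:
  fixes C :: "'a::linorder set"
  assumes "finite C"
  shows "card {p \<in> C \<times> C. fst p \<le> snd p} = card C * (card C + 1) div 2"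
proof -
  define U where "U = {p \<in> C \<times> C. fst p \<le> snd p}"
  define L where "L = {p \<in> C \<times> C. snd p \<le> fst p}"
  have fin: "finite U" "finite L" unfolding U_def L_def using assms by auto
  have "U \<union> L = C \<times> C" unfolding U_def L_def by auto
  moreover have "card (U \<inter> L) = card C"
  proof -
    have "U \<inter> L = (\<lambda>x. (x, x)) ` C" unfolding U_def L_def by auto
    then show ?thesis by (simp add: card_image inj_on_def)
  qed
  moreover have "card L = card U"
  proof -
    have "L = (\<lambda>(x, y). (y, x)) ` U" unfolding U_def L_def by force
    moreover have "inj_on (\<lambda>(x, y). (y, x)) U" by (auto simp: inj_on_def)
    ultimately show ?thesis by (simp add: card_image)
  qed
  ultimately have "card C * card C + card C = 2 * card U"
    using card_Un_Int[OF fin] by (simp add: card_cartesian_product)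
  then show ?thesis unfolding U_def by simp
qed

lemma commutative_on_zero_table_iff:
  fixes f :: "'a::linorder \<Rightarrow> 'a \<Rightarrow> 'a"
  assumes "f \<in> zero_tables A B z"
  shows "commutative_on A f \<longleftrightarrow> (\<forall>x\<in>A - B. \<forall>y\<in>A - B. f x y = f (min x y) (max x y))"
proof
  assume "commutative_on A f"
  then show "\<forall>x\<in>A - B. \<forall>y\<in>A - B. f x y = f (min x y) (max x y)"
    unfolding commutative_on_def by (auto simp: min_def max_def)
next
  assume sym: "\<forall>x\<in>A - B. \<forall>y\<in>A - B. f x y = f (min x y) (max x y)"
  have "f x y = f y x" if "x \<in> A" "y \<in> A" for x y
  proof (cases "x \<in> B \<or> y \<in> B")
    case True
    then show ?thesis using assms that unfolding zero_tables_def by auto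
  next
    case False
    then show ?thesis using sym that by (metis DiffI min.commute max.commute)
  qed
  then show "commutative_on A f" unfolding commutative_on_def by blast
qed

lemma card_commutative_zero_tables:
  fixes A :: "'a::linorder set"
  assumes "finite A" "B \<subseteq> A" "z \<in> B"
  shows "int (card {f \<in> zero_tables A B z. commutative_on A f})
       = cover_sum (int (card B)) (card B - 1)
           ((card A - card B) * (card A - card B + 1) div 2)"
proof -
  interpret representatives A B z "{p \<in> (A - B) \<times> (A - B). fst p \<le> snd p}"
    "\<lambda>(x, y). (min x y, max x y)"
    by unfold_locales (use assms in \<open>auto simp: min_def max_def\<close>)
  have "normal_tables = {f \<in> zero_tables A B z. commutative_on A f}"
    unfolding normal_tables_def using commutative_on_zero_table_iff by auto
  moreover have "card {p \<in> (A - B) \<times> (A - B). fst p \<le> snd p}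
      = (card A - card B) * (card A - card B + 1) div 2"
    using assms by (simp add: card_ordered_pairs card_Diff_subset finite_subset)
  ultimately show ?thesis
    using card_normal_tables_formula assms by (simp add: finite_subset)
qed

lemma card_nilpotent_degree_3:
  assumes "finite A"
  shows "int (card {f \<in> A \<rightarrow>\<^sub>E (A \<rightarrow>\<^sub>E A). nilpotent_degree A f 3})
       = (\<Sum>m=2..card A. int (card A choose m) *
            (int m * cover_sum (int m) (m - 1) ((card A - m)^2)))"
proof -
  have "int (card {f \<in> A \<rightarrow>\<^sub>E (A \<rightarrow>\<^sub>E A). nilpotent_degree A f 3})
      = (\<Sum>(B, z)\<in>pointed_squares A. int (card (zero_tables A B z)))"
    using card_nilpotent_degree_3_split[OF assms, of "\<lambda>_. True"]
    by (simp add: of_nat_sum case_prod_beta)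
  also have "\<dots> = (\<Sum>(B, z)\<in>pointed_squares A.
                    cover_sum (int (card B)) (card B - 1) ((card A - card B)^2))"
    using assms by (intro sum.cong) (auto simp: pointed_squares_def card_zero_tables)
  also have "\<dots> = (\<Sum>m=2..card A. int (card A choose m) *
                    (int m * cover_sum (int m) (m - 1) ((card A - m)^2)))"
    by (rule sum_pointed_squares[OF assms])
  finally show ?thesis .
qed

lemma card_commutative_nilpotent_degree_3:
  fixes A :: "'a::linorder set"
  assumes "finite A"
  shows "int (card {f \<in> A \<rightarrow>\<^sub>E (A \<rightarrow>\<^sub>E A). nilpotent_degree A f 3 \<and> commutative_on A f})
       = (\<Sum>m=2..card A. int (card A choose m) *
            (int m * cover_sum (int m) (m - 1) ((card A - m) * (card A - m + 1) div 2)))"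
proof -
  have "int (card {f \<in> A \<rightarrow>\<^sub>E (A \<rightarrow>\<^sub>E A). nilpotent_degree A f 3 \<and> commutative_on A f})
      = (\<Sum>(B, z)\<in>pointed_squares A. int (card {f \<in> zero_tables A B z. commutative_on A f}))"
    using card_nilpotent_degree_3_split[OF assms] by (simp add: of_nat_sum case_prod_beta)
  also have "\<dots> = (\<Sum>(B, z)\<in>pointed_squares A. cover_sum (int (card B)) (card B - 1)
                    ((card A - card B) * (card A - card B + 1) div 2))"
    using assms by (intro sum.cong) (auto simp: pointed_squares_def card_commutative_zero_tables)
  also have "\<dots> = (\<Sum>m=2..card A. int (card A choose m) *
                    (int m * cover_sum (int m) (m - 1) ((card A - m) * (card A - m + 1) div 2)))"
    by (rule sum_pointed_squares[OF assms])
  finally show ?thesis .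
qed

section \<open>Truncating the sums at a(n) and c(n)\<close>

lemma less_sqrt_imp_square_less:
  fixes a y :: real
  assumes "0 \<le> a" "a < sqrt y"
  shows "a^2 < y"
proof -
  have "sqrt (a^2) < sqrt y" using assms by simp
  then show ?thesis by (simp only: real_sqrt_less_iff)
qed

text \<open>Beyond a(n), the number (n - m)^2 of free products is too small to cover the m - 1
  nonzero elements of the square.\<close>
lemma a_bound_too_few_products:
  assumes "2 \<le> m" "m \<le> n" "a_bound n < int m"
  shows "(n - m)^2 < m - 1"
proof -
  define k where "k = n - m"
  have n: "n = m + k" unfolding k_def using assms by simp
  have "real k + 1/2 < sqrt (real n - 3/4)"
    using assms(3) unfolding a_bound_def floor_less_iff n by simp
  then have "(real k + 1/2)^2 < real n - 3/4"
    by (intro less_sqrt_imp_square_less) simp_all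
  then have "real (k * k + k + 1) < real n" by (simp add: power2_eq_square algebra_simps)
  then have "k * k + k + 1 < n" by linarith
  then show ?thesis unfolding k_def[symmetric] n by (simp add: power2_eq_square)
qed

text \<open>Likewise beyond c(n) for the (n - m)(n - m + 1)/2 free products of a commutative table.\<close>
lemma c_bound_too_few_products:
  assumes "2 \<le> m" "m \<le> n" "c_bound n < int m"
  shows "(n - m) * (n - m + 1) div 2 < m - 1"
proof -
  define k where "k = n - m"
  have n: "n = m + k" unfolding k_def using assms by simp
  have "real k + 3/2 < sqrt (2 * real n + 1/4)"
    using assms(3) unfolding c_bound_def floor_less_iff n by simp
  then have "(real k + 3/2)^2 < 2 * real n + 1/4"
    by (intro less_sqrt_imp_square_less) simp_all
  then have "real (k * k + 3 * k + 2) < real (2 * n)" by (simp add: power2_eq_square algebra_simps)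
  then have "k * k + 3 * k + 2 < 2 * n" by linarith
  then have "k * (k + 1) < 2 * (m - 1)" using n assms(1) by (simp add: algebra_simps)
  then show ?thesis unfolding k_def[symmetric] by linarith
qed

lemma sum_int_interval_truncate:
  fixes R :: "int \<Rightarrow> int" and b :: int
  assumes above: "\<And>m. int n < m \<Longrightarrow> R m = 0"
    and between: "\<And>m. 2 \<le> m \<Longrightarrow> m \<le> int n \<Longrightarrow> b < m \<Longrightarrow> R m = 0"
  shows "(\<Sum>m\<in>{2..b}. R m) = (\<Sum>m=2..n. R (int m))"
proof -
  have "(\<Sum>m\<in>{2..b}. R m) = (\<Sum>m\<in>{2..max b (int n)}. R m)"
  proof (rule sum.mono_neutral_left)
    show "\<forall>i\<in>{2..max b (int n)} - {2..b}. R i = 0"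
    proof
      fix i assume i: "i \<in> {2..max b (int n)} - {2..b}"
      show "R i = 0"
      proof (cases "i \<le> int n")
        case True
        then show ?thesis using i by (intro between) auto
      next
        case False
        then show ?thesis by (intro above) simp
      qed
    qed
  qed auto
  also have "\<dots> = (\<Sum>m\<in>{2..int n}. R m)"
    by (rule sum.mono_neutral_right) (auto intro: above between)
  also have "{2..int n} = int ` {2..n}"
    by (simp add: image_int_atLeastAtMost)
  finally show ?thesis by (simp add: sum.reindex)
qed

lemma truncated_closed_form:
  fixes b :: int and K :: "nat \<Rightarrow> nat"
  assumes few: "\<And>m. 2 \<le> m \<Longrightarrow> m \<le> n \<Longrightarrow> b < int m \<Longrightarrow> K m < m - 1"
  shows "(\<Sum>m\<in>{2..b}. int (n choose nat m) * m *
            (\<Sum>i=0..m-1. (-1)^nat i * int ((nat m - 1) choose nat i) * (m - i) ^ K (nat m)))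
       = (\<Sum>m=2..n. int (n choose m) * (int m * cover_sum (int m) (m - 1) (K m)))"
proof -
  have inner: "(\<Sum>i=0..int m - 1. (-1)^nat i * int ((m - 1) choose nat i) * (int m - i) ^ k)
      = cover_sum (int m) (m - 1) k" if "1 \<le> m" for m k
  proof -
    have "{0..int m - 1} = int ` {..m - 1}"
      using that by (simp add: atMost_atLeast0 image_int_atLeastAtMost of_nat_diff)
    then show ?thesis unfolding cover_sum_def by (simp add: sum.reindex)
  qed
  define R where "R m = int (n choose nat m) * m *
    (\<Sum>i=0..m-1. (-1)^nat i * int ((nat m - 1) choose nat i) * (m - i) ^ K (nat m))" for m :: int
  have R_int: "R (int k) = int (n choose k) * (int k * cover_sum (int k) (k - 1) (K k))"
    if "1 \<le> k" for k
    using inner[OF that, of "K k"] unfolding R_def by simp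
  have "(\<Sum>m\<in>{2..b}. R m) = (\<Sum>m=2..n. R (int m))"
  proof (rule sum_int_interval_truncate)
    fix m :: int assume "int n < m"
    then have "n < nat m" by (simp add: zless_nat_eq_int_zless)
    then show "R m = 0" unfolding R_def by simp
  next
    fix m :: int assume m: "2 \<le> m" "m \<le> int n" "b < m"
    define k where "k = nat m"
    have k: "m = int k" "2 \<le> k" "k \<le> n" "b < int k" using m unfolding k_def by auto
    have "cover_sum (int k) (k - 1) (K k) = 0"
      using few[OF k(2-4)] by (intro cover_sum_vanishes) auto
    then show "R m = 0" using R_int[of k] k by simp
  qed
  also have "\<dots> = (\<Sum>m=2..n. int (n choose m) * (int m * cover_sum (int m) (m - 1) (K m)))"
    by (rule sum.cong) (simp_all add: R_int)
  finally show ?thesis unfolding R_def .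
qed

theorem theorem2p1:
  fixes n :: nat
  shows "(int (card {f \<in> tables n. nilpotent_degree {1..n} f 3}) =
           (\<Sum>m\<in>{2..a_bound n}. int (n choose nat m) * m *
              (\<Sum>i=0..m-1. (-1)^nat i * int ((nat m - 1) choose nat i) * (m - i) ^ ((n - nat m)^2)))) \<and>
         int (card {f \<in> tables n. nilpotent_degree {1..n} f 3 \<and> commutative_on {1..n} f}) =
           (\<Sum>m\<in>{2..c_bound n}. int (n choose nat m) * m *
              (\<Sum>i=0..m-1. (-1)^nat i * int ((nat m - 1) choose nat i) *
                 (m - i) ^ ((n - nat m) * (n - nat m + 1) div 2)))"
proof
  show "int (card {f \<in> tables n. nilpotent_degree {1..n} f 3}) =
           (\<Sum>m\<in>{2..a_bound n}. int (n choose nat m) * m *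
              (\<Sum>i=0..m-1. (-1)^nat i * int ((nat m - 1) choose nat i) * (m - i) ^ ((n - nat m)^2)))"
    using card_nilpotent_degree_3[of "{1..n}"]
      truncated_closed_form[where K = "\<lambda>m. (n - m)^2", OF a_bound_too_few_products]
    unfolding tables_def by simp
  show "int (card {f \<in> tables n. nilpotent_degree {1..n} f 3 \<and> commutative_on {1..n} f}) =
           (\<Sum>m\<in>{2..c_bound n}. int (n choose nat m) * m *
              (\<Sum>i=0..m-1. (-1)^nat i * int ((nat m - 1) choose nat i) *
                 (m - i) ^ ((n - nat m) * (n - nat m + 1) div 2)))"
    using card_commutative_nilpotent_degree_3[of "{1..n}"]
      truncated_closed_form[where K = "\<lambda>m. (n - m) * (n - m + 1) div 2", OF c_bound_too_few_products]
    unfolding tables_def by simp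
qed

end
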